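(* Let $n>5$ be prime and let $\gamma:\mathbb{Z}_n\to[0,1]$ be a probability distribution with $\gamma(k)\in\mathbb{Q}$ for all $k\in\mathbb{Z}_n$. If the random walk on $\mathbb{Z}_n$ with step distribution $\gamma$ is reconstructive, then the Fourier coefficients $\{\hat{\gamma}(x)\}_{x\in\mathbb{Z}_n}$ are pairwise distinct.
   Context: $\mathbb{Z}_n=\mathbb{Z}/n\mathbb{Z}$. The random walk $v(t)$ with step distribution $\gamma$ on a finite abelian group $H$ has $v(1)$ uniform on $H$ and $\mathbb{P}(v(t+1)-v(t)=k)=\gamma(k)$, steps independent. A labeling (scenery) is a function $f:H\to\{0,1\}$. The walk is called reconstructive if, for any two labelings $f_1,f_2$, the distributions of the sequences $\{f_1(v(t))\}_{t\ge1}$ and $\{f_2(v(t))\}_{t\ge1}$ coincide only if $f_1$ is a shift of $f_2$, i.e. there is $\ell\in H$ with $f_1(k)=f_2(k+\ell)$ for all $k$. The Fourier transform is $\hat{\gamma}(x)=\sum_{k\in\mathbb{Z}_n}\omega_n^{kx}\gamma(k)$ with $\omega_n=e^{-2\pi i/n}$. *)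

theory Defs
  imports "HOL-Analysis.Analysis"
begin

text \<open>Z_n is represented by {0..<n} (nat, arithmetic mod n). A step distribution is
  gamma :: nat => real, meaningful on {0..<n}. A labeling is f :: nat => bool
  (only its values on {0..<n} matter).\<close>

definition step_dist :: "nat \<Rightarrow> (nat \<Rightarrow> real) \<Rightarrow> bool" where
  "step_dist n \<gamma> \<longleftrightarrow> (\<forall>k<n. 0 \<le> \<gamma> k \<and> \<gamma> k \<le> 1) \<and> (\<Sum>k<n. \<gamma> k) = 1"

text \<open>walk_prob n gamma f w x: probability that, starting at x, the observed labels
  f(v(1)),...,f(v(m)) equal the word w (with v(1) = x).\<close>
fun walk_prob :: "nat \<Rightarrow> (nat \<Rightarrow> real) \<Rightarrow> (nat \<Rightarrow> bool) \<Rightarrow> bool list \<Rightarrow> nat \<Rightarrow> real" where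
  "walk_prob n \<gamma> f [] x = 1"
| "walk_prob n \<gamma> f (b # ws) x =
     (if f x = b then (\<Sum>k<n. \<gamma> k * walk_prob n \<gamma> f ws ((x + k) mod n)) else 0)"

text \<open>Finite-dimensional distribution of the label sequence: v(1) uniform on Z_n.\<close>
definition seq_prob :: "nat \<Rightarrow> (nat \<Rightarrow> real) \<Rightarrow> (nat \<Rightarrow> bool) \<Rightarrow> bool list \<Rightarrow> real" where
  "seq_prob n \<gamma> f w = (\<Sum>x<n. walk_prob n \<gamma> f w x) / real n"

text \<open>Two label sequences have the same distribution iff all finite-dimensional
  (cylinder) probabilities agree.\<close>
definition same_law :: "nat \<Rightarrow> (nat \<Rightarrow> real) \<Rightarrow> (nat \<Rightarrow> bool) \<Rightarrow> (nat \<Rightarrow> bool) \<Rightarrow> bool" where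
  "same_law n \<gamma> f1 f2 \<longleftrightarrow> (\<forall>w. seq_prob n \<gamma> f1 w = seq_prob n \<gamma> f2 w)"

definition is_shift :: "nat \<Rightarrow> (nat \<Rightarrow> bool) \<Rightarrow> (nat \<Rightarrow> bool) \<Rightarrow> bool" where
  "is_shift n f1 f2 \<longleftrightarrow> (\<exists>l<n. \<forall>k<n. f1 k = f2 ((k + l) mod n))"

definition reconstructive :: "nat \<Rightarrow> (nat \<Rightarrow> real) \<Rightarrow> bool" where
  "reconstructive n \<gamma> \<longleftrightarrow> (\<forall>f1 f2. same_law n \<gamma> f1 f2 \<longrightarrow> is_shift n f1 f2)"

definition fourier :: "nat \<Rightarrow> (nat \<Rightarrow> real) \<Rightarrow> nat \<Rightarrow> complex" where
  "fourier n \<gamma> x = (\<Sum>k<n. exp (- 2 * pi * \<i> * of_nat (k * x) / of_nat n) * of_real (\<gamma> k))"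

end

theory Submission
  imports Defs "HOL-Computational_Algebra.Polynomial" "HOL-Number_Theory.Cong"
begin

text \<open>If the Fourier coefficients at x \<noteq> y agree, substituting k = x'm and k = y'm (with x', y'
  the inverses of x, y mod n) in the two sums writes their difference as a relation
  \<Sum>(m < n) a(m) \<omega>^m = 0 with rational a(m). As 1 + X + ... + X^(n-1) is irreducible over the
  rationals (Eisenstein at X + 1), such a relation has constant coefficients. This forces
  \<gamma>(k) = \<gamma>(c k mod n) for all k and some c \<notin> {0, 1}; when x = 0 it even forces \<gamma> to be the point
  mass at 0. For such c the labelings f and f(c \<cdot>) have the same law, but for f the indicator of
  {0, 1}, or of {0, 1, 3} when c = n - 1, they are not shifts of each other.\<close>

lemma prime_not_dvd_low_coeff_mult:
  fixes A B :: "int poly" and p :: int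
  assumes p: "prime p" and lc: "\<not> p dvd lead_coeff (A * B)"
    and dB: "degree B > 0" and b0: "\<not> p dvd coeff B 0"
  shows "\<exists>k<degree (A * B). \<not> p dvd coeff (A * B) k"
proof -
  have "A \<noteq> 0" "B \<noteq> 0" using lc by auto
  hence deg: "degree (A * B) = degree A + degree B" by (rule degree_mult_eq)
  have "\<not> p dvd lead_coeff A" using lc by (metis dvd_mult2 lead_coeff_mult)
  define k where "k = (LEAST i. \<not> p dvd coeff A i)"
  have ak: "\<not> p dvd coeff A k" unfolding k_def by (rule LeastI) fact
  have "k \<le> degree A" unfolding k_def by (rule Least_le) fact
  have below: "p dvd coeff A i" if "i < k" for i
    using that unfolding k_def by (rule not_less_Least[THEN notnotD])
  have "coeff (A * B) k = (\<Sum>i<k. coeff A i * coeff B (k - i)) + coeff A k * coeff B 0"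
    by (simp add: coeff_mult lessThan_Suc_atMost[symmetric])
  moreover have "p dvd (\<Sum>i<k. coeff A i * coeff B (k - i))" by (rule dvd_sum) (simp add: below)
  moreover have "\<not> p dvd coeff A k * coeff B 0" using p ak b0 by (simp add: prime_dvd_mult_iff)
  ultimately have "\<not> p dvd coeff (A * B) k" by (metis dvd_add_right_iff)
  moreover have "k < degree (A * B)" using \<open>k \<le> degree A\<close> deg dB by simp
  ultimately show ?thesis by blast
qed

lemma eisenstein_factor_degree_0:
  fixes A B :: "int poly" and p :: int
  assumes p: "prime p" and lc: "\<not> p dvd lead_coeff (A * B)"
    and low: "\<forall>k<degree (A * B). p dvd coeff (A * B) k" and c0: "\<not> p^2 dvd coeff (A * B) 0"
  shows "degree A = 0 \<or> degree B = 0"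
proof (rule ccontr)
  assume "\<not> (degree A = 0 \<or> degree B = 0)"
  hence dA: "degree A > 0" and dB: "degree B > 0" by auto
  have "A \<noteq> 0" "B \<noteq> 0" using lc by auto
  hence "degree (A * B) > 0" using dA by (simp add: degree_mult_eq)
  hence "p dvd coeff A 0 * coeff B 0" using low by (metis coeff_mult_0)
  moreover have "\<not> (p dvd coeff A 0 \<and> p dvd coeff B 0)"
    using c0 mult_dvd_mono[of p "coeff A 0" p "coeff B 0"]
    by (auto simp: coeff_mult_0 power2_eq_square)
  ultimately have "\<not> p dvd coeff B 0 \<or> \<not> p dvd coeff A 0"
    using p by (auto simp: prime_dvd_mult_iff)
  thus False
    using prime_not_dvd_low_coeff_mult[OF p lc dB] prime_not_dvd_low_coeff_mult[of p B A] p lc dA low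
    by (auto simp: mult.commute)
qed

text \<open>For prime p this is the cyclotomic polynomial \<Phi>(p).\<close>

definition geom_poly :: "nat \<Rightarrow> int poly" where
  "geom_poly p = (\<Sum>m<p. monom 1 m)"

lemma coeff_geom_poly: "coeff (geom_poly p) i = (if i < p then 1 else 0)"
  by (simp add: geom_poly_def coeff_sum coeff_monom)

lemma degree_geom_poly: "p > 0 \<Longrightarrow> degree (geom_poly p) = p - 1"
  by (intro antisym degree_le le_degree) (auto simp: coeff_geom_poly)

lemma content_geom_poly: "p > 0 \<Longrightarrow> content (geom_poly p) = 1"
  using content_dvd_coeff[of "geom_poly p" 0]
  by (subst is_unit_content_iff[symmetric]) (simp add: coeff_geom_poly)

lemma pcompose_power_left: "pcompose (p ^ m) q = pcompose p q ^ m"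
  by (induction m) (simp_all add: pcompose_mult pcompose_1)

lemma geom_poly_shift:
  "pCons 0 (pcompose (geom_poly p) [:1, 1:]) = [:1, 1:] ^ p - 1"
proof -
  have "([:0, 1:] - 1) * geom_poly p = [:0, 1:] ^ p - 1"
    by (simp add: geom_poly_def monom_altdef power_diff_1_eq)
  hence "pcompose (([:0, 1:] - 1) * geom_poly p) [:1, 1:] = pcompose ([:0, 1:] ^ p - 1) [:1, 1:]"
    by (rule arg_cong)
  hence "pcompose ([:0, 1:] - 1) [:1, 1:] * pcompose (geom_poly p) [:1, 1:] = [:1, 1:] ^ p - 1"
    by (simp add: pcompose_mult pcompose_diff pcompose_power_left pcompose_1 pcompose_pCons)
  moreover have "pcompose ([:0, 1:] - 1) [:1, 1:] = [:0, 1 :: int:]"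
    by (simp add: pcompose_diff pcompose_1 pcompose_pCons one_pCons)
  ultimately show ?thesis by simp
qed

lemma coeff_geom_poly_shift:
  "coeff (pcompose (geom_poly p) [:1, 1:]) k = (if Suc k \<le> p then int (p choose Suc k) else 0)"
proof -
  have "coeff (pcompose (geom_poly p) [:1, 1:]) k = coeff ([:1, 1:] ^ p - 1) (Suc k)"
    by (simp flip: geom_poly_shift)
  thus ?thesis by (auto simp: coeff_linear_poly_power coeff_eq_0 degree_linear_power)
qed

lemma geom_poly_factor_degree_0:
  assumes p: "prime p" and AB: "geom_poly p = A * B"
  shows "degree A = 0 \<or> degree B = 0"
proof -
  let ?shift = "\<lambda>q. pcompose q [:1, 1 :: int:]"
  have p1: "p > 1" using p prime_gt_1_nat by blast
  have deg: "degree (?shift A * ?shift B) = p - 1"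
    using p1 by (simp flip: AB pcompose_mult add: degree_pcompose degree_geom_poly)
  have coeff: "coeff (?shift A * ?shift B) k = (if Suc k \<le> p then int (p choose Suc k) else 0)" for k
    by (simp flip: AB pcompose_mult add: coeff_geom_poly_shift)
  have "degree (?shift A) = 0 \<or> degree (?shift B) = 0"
  proof (rule eisenstein_factor_degree_0[of "int p"])
    show "prime (int p)" using p by simp
    show "\<not> int p dvd lead_coeff (?shift A * ?shift B)" using p1 by (simp add: deg coeff)
    show "\<forall>k<degree (?shift A * ?shift B). int p dvd coeff (?shift A * ?shift B) k"
      using p by (auto simp: deg coeff intro: dvd_choose_prime)
    show "\<not> (int p)^2 dvd coeff (?shift A * ?shift B) 0"
      using p1 by (simp add: coeff power2_eq_square)
  qed
  thus ?thesis by (simp add: degree_pcompose)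
qed

lemma map_poly_of_int_add:
  "map_poly of_int (p + q) = (map_poly of_int p + map_poly of_int q :: 'a :: comm_ring_1 poly)"
  by (rule poly_eqI) (simp add: coeff_map_poly)

lemma map_poly_of_int_mult:
  "map_poly of_int (p * q) = (map_poly of_int p * map_poly of_int q :: 'a :: comm_ring_1 poly)"
  by (rule poly_eqI) (simp add: coeff_map_poly coeff_mult)

lemma map_poly_of_int_sum:
  "map_poly of_int (sum f A) = (\<Sum>x\<in>A. map_poly of_int (f x) :: 'a :: comm_ring_1 poly)"
  by (rule poly_eqI) (simp add: coeff_map_poly coeff_sum)

lemma poly_geom_poly_root_of_unity:
  fixes z :: complex
  assumes "z ^ p = 1" "z \<noteq> 1"
  shows "poly (map_poly of_int (geom_poly p)) z = 0"
  using assms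
  by (simp add: geom_poly_def map_poly_of_int_sum map_poly_monom poly_sum poly_monom sum_gp_strict)

lemma smult_geom_poly_factor_degree_0:
  assumes p: "prime p" and a: "a \<noteq> 0" and AB: "smult a (geom_poly p) = A * B"
  shows "degree A = 0 \<or> degree B = 0"
proof -
  have "content (geom_poly p) = 1" using p prime_gt_0_nat by (blast intro: content_geom_poly)
  hence "smult (sgn a) (geom_poly p) = primitive_part A * primitive_part B"
    by (metis AB primitive_part_mult primitive_part_smult primitive_part_prim unit_factor_int_def)
  hence "smult (sgn a * sgn a) (geom_poly p) = primitive_part A * smult (sgn a) (primitive_part B)"
    by (metis mult_smult_right smult_smult)
  moreover have "sgn a * sgn a = 1" using a by (simp add: sgn_if)
  ultimately have "geom_poly p = primitive_part A * smult (sgn a) (primitive_part B)" by simp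
  from geom_poly_factor_degree_0[OF p this] show ?thesis using a by (cases "a > 0") auto
qed

lemma degree_int_poly_root_of_unity:
  fixes z :: complex and A :: "int poly"
  assumes p: "prime p" and z: "z ^ p = 1" "z \<noteq> 1"
    and "A \<noteq> 0" and "poly (map_poly of_int A) z = 0"
  shows "p - 1 \<le> degree A"
  using assms(4,5)
proof (induction "degree A" arbitrary: A rule: less_induct)
  case (less A)
  \<comment> \<open>Pseudo-divide \<Phi>(p) by A: a nonzero remainder is a root of smaller degree, and a zero
    remainder makes A a factor of positive degree of a multiple of \<Phi>(p).\<close>
  define r where "r = pseudo_mod (geom_poly p) A"
  obtain a q where a: "a \<noteq> 0" and div: "smult a (geom_poly p) = A * q + r"
    using pseudo_mod(1)[OF less.prems(1)] unfolding r_def by blast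
  have "poly (map_poly of_int (smult a (geom_poly p))) z = (0 :: complex)"
    by (simp add: map_poly_smult poly_geom_poly_root_of_unity[OF z])
  hence r_root: "poly (map_poly of_int r) z = 0"
    using less.prems(2) by (simp add: div map_poly_of_int_add map_poly_of_int_mult)
  show ?case
  proof (cases "r = 0")
    case False
    hence r_deg: "degree r < degree A"
      using pseudo_mod(2)[OF less.prems(1)] unfolding r_def by blast
    from less.hyps[OF this False r_root] r_deg show ?thesis by linarith
  next
    case True
    have "degree A \<noteq> 0"
    proof
      assume "degree A = 0"
      then obtain c where "A = [:c:]" by (rule degree_eq_zeroE)
      thus False using less.prems by (simp add: map_poly_pCons)
    qed
    hence "degree q = 0"
      using smult_geom_poly_factor_degree_0[OF p a, of A q] div True by simp
    moreover have "q \<noteq> 0" "p > 0" using div True a p prime_gt_0_nat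
      by (auto simp: coeff_geom_poly dest: arg_cong[of _ _ "\<lambda>f. coeff f 0"])
    ultimately have "degree A = degree (smult a (geom_poly p))"
      using div True less.prems(1) by (simp add: degree_mult_eq)
    thus ?thesis using a \<open>p > 0\<close> by (simp add: degree_geom_poly)
  qed
qed

lemma int_relation_root_of_unity_const:
  fixes z :: complex and b :: "nat \<Rightarrow> int"
  assumes p: "prime p" and z: "z ^ p = 1" "z \<noteq> 1"
    and rel: "(\<Sum>m<p. of_int (b m) * z ^ m) = 0" and m: "m < p"
  shows "b m = b 0"
proof -
  have p1: "p > 1" using p prime_gt_1_nat by blast
  define C where "C = (\<Sum>m<p. monom (b m - b (p - 1)) m)"
  have coeff_C: "coeff C i = (if i < p then b i - b (p - 1) else 0)" for i
    by (simp add: C_def coeff_sum coeff_monom)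
  have "poly (map_poly of_int C) z = (\<Sum>m<p. (of_int (b m) - of_int (b (p - 1))) * z ^ m)"
    by (simp add: C_def map_poly_of_int_sum map_poly_monom poly_sum poly_monom)
  also have "\<dots> = (\<Sum>m<p. of_int (b m) * z ^ m) - of_int (b (p - 1)) * (\<Sum>m<p. z ^ m)"
    by (simp add: left_diff_distrib sum_subtractf sum_distrib_left)
  also have "\<dots> = 0" using rel z by (simp add: sum_gp_strict)
  finally have C_root: "poly (map_poly of_int C) z = 0" .
  have "C = 0"
  proof (rule ccontr)
    assume "C \<noteq> 0"
    have "degree C \<le> p - 2"
    proof (rule degree_le, intro allI impI)
      fix i assume "p - 2 < i"
      hence "i \<ge> p \<or> i = p - 1" by linarith
      thus "coeff C i = 0" by (auto simp: coeff_C)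
    qed
    moreover have "p - 1 \<le> degree C"
      by (rule degree_int_poly_root_of_unity[OF p z \<open>C \<noteq> 0\<close> C_root])
    ultimately show False using p1 by simp
  qed
  hence "b i = b (p - 1)" if "i < p" for i using coeff_C[of i] that by simp
  from this[OF m] this[of 0] p1 show ?thesis by simp
qed

lemma Rats_common_denominator:
  assumes "finite A" "\<forall>x\<in>A. a x \<in> \<rat>"
  shows "\<exists>D::int. D > 0 \<and> (\<forall>x\<in>A. of_int D * a x \<in> (\<int> :: 'a :: field_char_0 set))"
  using assms
proof (induction A rule: finite_induct)
  case empty
  show ?case by (intro exI[of _ 1]) simp
next
  case (insert y A)
  then obtain D :: int where D: "D > 0" "\<forall>x\<in>A. of_int D * a x \<in> \<int>" by auto
  obtain u v :: int where uv: "v > 0" "a y = of_int u / of_int v"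
    using insert.prems by (auto elim: Rats_cases')
  have "of_int (D * v) * a x \<in> \<int>" if "x \<in> insert y A" for x
  proof (cases "x = y")
    case True
    have "of_int (D * v) * a y = of_int (D * u)" using uv by (simp add: field_simps)
    thus ?thesis using True by (metis Ints_of_int)
  next
    case False
    hence "of_int v * (of_int D * a x) \<in> \<int>" using D(2) that by (auto intro: Ints_mult)
    thus ?thesis by (simp add: ac_simps)
  qed
  thus ?case using D(1) uv(1) by (intro exI[of _ "D * v"]) simp
qed

lemma rat_relation_root_of_unity_const:
  fixes z :: complex and a :: "nat \<Rightarrow> real"
  assumes p: "prime p" and z: "z ^ p = 1" "z \<noteq> 1"
    and rat: "\<forall>m<p. a m \<in> \<rat>" and rel: "(\<Sum>m<p. of_real (a m) * z ^ m) = 0"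
    and m: "m < p"
  shows "a m = a 0"
proof -
  obtain D :: int where D: "D > 0" "\<forall>m\<in>{..<p}. of_int D * a m \<in> \<int>"
    using Rats_common_denominator[of "{..<p}" a] rat by auto
  define b where "b m = \<lfloor>of_int D * a m\<rfloor>" for m
  have b: "of_int (b m) = of_int D * a m" if "m < p" for m
    using D(2) that unfolding b_def by (metis Ints_cases floor_of_int lessThan_iff)
  have "(\<Sum>m<p. of_int (b m) * z ^ m) = of_int D * (\<Sum>m<p. of_real (a m) * z ^ m)"
    unfolding sum_distrib_left
  proof (rule sum.cong)
    fix m assume "m \<in> {..<p}"
    hence "complex_of_int (b m) = of_real (of_int D * a m)" by (simp flip: b)
    thus "of_int (b m) * z ^ m = of_int D * (of_real (a m) * z ^ m)" by simp
  qed simp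
  hence "(\<Sum>m<p. of_int (b m) * z ^ m) = 0" using rel by simp
  hence "b m = b 0" by (rule int_relation_root_of_unity_const[OF p z _ m])
  thus ?thesis using b[OF m] b[of 0] m D(1) by simp
qed

lemma bij_betw_mult_mod_prime:
  fixes n c :: nat
  assumes n: "prime n" and c: "\<not> n dvd c"
  shows "bij_betw (\<lambda>k. c * k mod n) {..<n} {..<n}"
proof -
  have "coprime c n" using prime_imp_coprime_nat[OF n c] by (simp add: coprime_commute)
  have inj: "inj_on (\<lambda>k. c * k mod n) {..<n}"
  proof (rule inj_onI)
    fix a b assume "a \<in> {..<n}" "b \<in> {..<n}" "c * a mod n = c * b mod n"
    hence "[a = b] (mod n)" "a < n" "b < n"
      using \<open>coprime c n\<close> by (auto simp: cong_mult_lcancel_nat simp flip: cong_def)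
    thus "a = b" by (simp add: cong_less_modulus_unique_nat)
  qed
  moreover have "(\<lambda>k. c * k mod n) ` {..<n} = {..<n}"
    using n prime_gt_0_nat by (intro endo_inj_surj[OF _ _ inj]) auto
  ultimately show ?thesis by (simp add: bij_betw_def)
qed

lemma exists_inverse_mod_prime:
  fixes n x :: nat
  assumes n: "prime n" and x: "\<not> n dvd x"
  obtains x' where "x * x' mod n = 1"
proof -
  have "1 \<in> (\<lambda>k. x * k mod n) ` {..<n}"
    using bij_betw_mult_mod_prime[OF n x] n prime_gt_1_nat by (auto simp: bij_betw_def)
  thus ?thesis using that by auto
qed

lemma mod_mult_inverse_cancel:
  fixes a b n k :: nat
  assumes "a * b mod n = 1"
  shows "b * (a * k mod n) mod n = k mod n"
proof -
  have "b * (a * k mod n) mod n = (a * b mod n) * k mod n"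
    by (metis mod_mult_right_eq mod_mult_left_eq mult.assoc mult.commute)
  thus ?thesis using assms by simp
qed

lemma mult_mod_prime_neq_0:
  fixes n a b :: nat
  assumes "prime n" "\<not> n dvd a" "\<not> n dvd b"
  shows "a * b mod n \<noteq> 0"
  using assms by (simp add: prime_dvd_mult_iff flip: dvd_eq_mod_eq_0)

definition omega :: "nat \<Rightarrow> complex" where
  "omega n = exp (- 2 * pi * \<i> / of_nat n)"

lemma omega_power: "omega n ^ m = exp (- 2 * pi * \<i> * of_nat m / of_nat n)"
  by (simp add: omega_def flip: exp_of_nat_mult) (simp add: field_simps)

lemma omega_power_n: "n > 0 \<Longrightarrow> omega n ^ n = 1"
  by (simp add: omega_power exp_minus)

lemma omega_power_mod: "n > 0 \<Longrightarrow> omega n ^ m = omega n ^ (m mod n)"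
  by (metis div_mult_mod_eq power_add power_mult omega_power_n power_one mult_1 mult.commute)

lemma omega_neq_1:
  assumes "n > 1"
  shows "omega n \<noteq> 1"
proof
  assume "omega n = 1"
  then obtain k :: int where "- 2 * pi / real n = 2 * pi * of_int k"
    by (auto simp: omega_def exp_eq_1)
  hence "pi * (real_of_int (k * int n) + 1) = 0" using assms by (simp add: field_simps)
  hence "real_of_int (k * int n) = real_of_int (- 1)" by simp
  hence "k * int n = - 1" by (simp only: of_int_eq_iff)
  hence "int n dvd 1" by (metis dvd_minus_iff dvd_triv_right)
  thus False using assms by simp
qed

lemma fourier_eq_sum_omega_power:
  assumes "n > 0"
  shows "fourier n \<gamma> x = (\<Sum>k<n. of_real (\<gamma> k) * omega n ^ (k * x mod n))"
  unfolding fourier_def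
proof (rule sum.cong)
  fix k
  show "exp (- 2 * pi * \<i> * of_nat (k * x) / of_nat n) * of_real (\<gamma> k)
      = of_real (\<gamma> k) * omega n ^ (k * x mod n)"
  proof -
    have "omega n ^ (k * x mod n) = exp (- 2 * pi * \<i> * of_nat (k * x) / of_nat n)"
      unfolding omega_power_mod[OF assms, of "k * x", symmetric] by (rule omega_power)
    thus ?thesis by (simp only: mult.commute)
  qed
qed simp

lemma fourier_reindex:
  assumes n: "prime n" and inv: "x * x' mod n = 1"
  shows "fourier n \<gamma> x = (\<Sum>m<n. of_real (\<gamma> (x' * m mod n)) * omega n ^ m)"
proof -
  let ?F = "\<lambda>k. of_real (\<gamma> k) * omega n ^ (k * x mod n)"
  have "\<not> n dvd x'" using inv n by (auto simp: mult_mod_right)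
  have "fourier n \<gamma> x = (\<Sum>k<n. ?F k)"
    using n prime_gt_0_nat by (simp add: fourier_eq_sum_omega_power)
  also have "\<dots> = (\<Sum>m<n. ?F (x' * m mod n))"
    using sum.reindex_bij_betw[OF bij_betw_mult_mod_prime[OF n \<open>\<not> n dvd x'\<close>], of ?F] by simp
  also have "\<dots> = (\<Sum>m<n. of_real (\<gamma> (x' * m mod n)) * omega n ^ m)"
  proof (rule sum.cong)
    fix m assume "m \<in> {..<n}"
    have "x' * x mod n = 1" using inv by (simp add: mult.commute)
    hence "(x' * m mod n) * x mod n = m"
      using mod_mult_inverse_cancel[of x' x n m] \<open>m \<in> {..<n}\<close> by (simp add: mult.commute)
    thus "?F (x' * m mod n) = of_real (\<gamma> (x' * m mod n)) * omega n ^ m" by simp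
  qed simp
  finally show ?thesis .
qed

lemma fourier_0: "step_dist n \<gamma> \<Longrightarrow> fourier n \<gamma> 0 = 1"
  by (simp add: fourier_def step_dist_def flip: of_real_sum)

definition mult_invariant :: "nat \<Rightarrow> (nat \<Rightarrow> real) \<Rightarrow> nat \<Rightarrow> bool" where
  "mult_invariant n \<gamma> c \<longleftrightarrow> (\<forall>k<n. \<gamma> k = \<gamma> (c * k mod n))"

lemma mult_invariant_if_reindexed_eq:
  assumes x': "x * x' mod n = 1" and eq: "\<forall>m<n. \<gamma> (x' * m mod n) = \<gamma> (y' * m mod n)"
  shows "mult_invariant n \<gamma> (y' * x mod n)"
  unfolding mult_invariant_def
proof (intro allI impI)
  fix k assume "k < n"
  hence "x' * (x * k mod n) mod n = k" "x * k mod n < n"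
    using mod_mult_inverse_cancel[OF x', of k] by simp_all
  hence "\<gamma> k = \<gamma> (y' * (x * k mod n) mod n)" using eq by metis
  also have "y' * (x * k mod n) mod n = (y' * x mod n) * k mod n"
    by (metis mod_mult_right_eq mod_mult_left_eq mult.assoc)
  finally show "\<gamma> k = \<gamma> ((y' * x mod n) * k mod n)" .
qed

lemma mult_invariant_if_fourier_eq_nonzero:
  assumes n: "prime n" and rat: "\<forall>k<n. \<gamma> k \<in> \<rat>"
    and x: "x < n" "x \<noteq> 0" and y: "y < n" "y \<noteq> 0" and "x \<noteq> y"
    and eq: "fourier n \<gamma> x = fourier n \<gamma> y"
  obtains c where "1 < c" "c < n" "mult_invariant n \<gamma> c"
proof -
  have n1: "n > 1" using n prime_gt_1_nat by blast
  have "\<not> n dvd x" "\<not> n dvd y" using x y by (auto dest: dvd_imp_le)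
  obtain x' where x': "x * x' mod n = 1" using exists_inverse_mod_prime[OF n \<open>\<not> n dvd x\<close>] .
  obtain y' where y': "y * y' mod n = 1" using exists_inverse_mod_prime[OF n \<open>\<not> n dvd y\<close>] .
  define a where "a m = \<gamma> (x' * m mod n) - \<gamma> (y' * m mod n)" for m
  have "(\<Sum>m<n. of_real (a m) * omega n ^ m) = fourier n \<gamma> x - fourier n \<gamma> y"
    by (simp add: a_def fourier_reindex[OF n x'] fourier_reindex[OF n y']
        sum_subtractf left_diff_distrib)
  hence rel: "(\<Sum>m<n. of_real (a m) * omega n ^ m) = 0" using eq by simp
  have "\<forall>m<n. a m \<in> \<rat>" using rat n1 by (simp add: a_def)
  hence "a m = 0" if "m < n" for m
    using rat_relation_root_of_unity_const[OF n omega_power_n omega_neq_1 _ rel that] n1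
    by (simp add: a_def)
  hence "mult_invariant n \<gamma> (y' * x mod n)"
    using mult_invariant_if_reindexed_eq[OF x'] by (simp add: a_def)
  moreover have "\<not> n dvd y'" using y' n1 by (auto simp: mult_mod_right)
  hence "y' * x mod n \<noteq> 0" using mult_mod_prime_neq_0[OF n _ \<open>\<not> n dvd x\<close>] by blast
  moreover have "y' * x mod n \<noteq> 1"
  proof
    assume "y' * x mod n = 1"
    moreover have "y' * y mod n = 1" using y' by (simp add: mult.commute)
    ultimately have "y mod n = x" using mod_mult_inverse_cancel[of y' y n x] x(1) by simp
    thus False using y \<open>x \<noteq> y\<close> by simp
  qed
  moreover have "y' * x mod n < n" using n1 by simp
  ultimately show thesis using that[of "y' * x mod n"] by simp
qed

lemma eq_0_if_fourier_eq_fourier_0: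
  assumes n: "prime n" and \<gamma>: "step_dist n \<gamma>" and rat: "\<forall>k<n. \<gamma> k \<in> \<rat>"
    and y: "y < n" "y \<noteq> 0" and eq: "fourier n \<gamma> 0 = fourier n \<gamma> y"
    and k: "k < n" "k \<noteq> 0"
  shows "\<gamma> k = 0"
proof -
  have n1: "n > 1" using n prime_gt_1_nat by blast
  have "\<not> n dvd y" using y by (auto dest: dvd_imp_le)
  obtain y' where y': "y * y' mod n = 1" using exists_inverse_mod_prime[OF n \<open>\<not> n dvd y\<close>] .
  define a where "a m = (if m = 0 then 1 else 0) - \<gamma> (y' * m mod n)" for m
  have "(\<Sum>m<n. of_real (if m = 0 then 1 else 0) * omega n ^ m) = 1"
    using n1 by (subst sum.remove[of _ 0]) auto
  hence "(\<Sum>m<n. of_real (a m) * omega n ^ m) = fourier n \<gamma> 0 - fourier n \<gamma> y"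
    by (simp add: a_def fourier_reindex[OF n y'] fourier_0[OF \<gamma>]
        sum_subtractf left_diff_distrib)
  hence rel: "(\<Sum>m<n. of_real (a m) * omega n ^ m) = 0" using eq by simp
  have "\<forall>m<n. a m \<in> \<rat>" using rat n1 by (simp add: a_def)
  hence a_const: "a m = a 0" if "m < n" for m
    using rat_relation_root_of_unity_const[OF n omega_power_n omega_neq_1 _ rel that] n1 by simp
  have "y' * (y * k mod n) mod n = k" using mod_mult_inverse_cancel[OF y', of k] k by simp
  moreover have "\<not> n dvd k" using k by (auto dest: dvd_imp_le)
  hence "y * k mod n \<noteq> 0" using mult_mod_prime_neq_0[OF n \<open>\<not> n dvd y\<close>] by blast
  ultimately have "\<gamma> k = \<gamma> 0 - 1" using a_const[of "y * k mod n"] n1 by (simp add: a_def)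
  moreover have "\<gamma> 0 \<le> 1" "\<gamma> k \<ge> 0" using \<gamma> n1 k by (auto simp: step_dist_def)
  ultimately show ?thesis by simp
qed

lemma mult_invariant_if_fourier_eq:
  assumes n: "prime n" "n > 2" and \<gamma>: "step_dist n \<gamma>" and rat: "\<forall>k<n. \<gamma> k \<in> \<rat>"
    and x: "x < n" and y: "y < n" and "x \<noteq> y" and eq: "fourier n \<gamma> x = fourier n \<gamma> y"
  obtains c where "1 < c" "c < n" "mult_invariant n \<gamma> c"
proof (cases "x = 0 \<or> y = 0")
  case True
  then obtain z where z: "z < n" "z \<noteq> 0" "fourier n \<gamma> 0 = fourier n \<gamma> z"
    using x y \<open>x \<noteq> y\<close> eq by (cases "x = 0") auto
  have "mult_invariant n \<gamma> 2"
    unfolding mult_invariant_def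
  proof (intro allI impI)
    fix k assume k: "k < n"
    show "\<gamma> k = \<gamma> (2 * k mod n)"
    proof (cases "k = 0")
      case False
      have "\<not> n dvd 2" "\<not> n dvd k" using n(2) k False by (auto dest: dvd_imp_le)
      hence "2 * k mod n \<noteq> 0" by (rule mult_mod_prime_neq_0[OF n(1)])
      thus ?thesis
        using eq_0_if_fourier_eq_fourier_0[OF n(1) \<gamma> rat z] k False n(2) by simp
    qed simp
  qed
  thus thesis using that[of 2] n(2) by simp
next
  case False
  thus thesis
    using mult_invariant_if_fourier_eq_nonzero[OF n(1) rat x _ y _ \<open>x \<noteq> y\<close> eq] that by blast
qed

lemma walk_prob_dilate:
  assumes n: "prime n" and c: "\<not> n dvd c" and inv: "mult_invariant n \<gamma> c"
  shows "walk_prob n \<gamma> (\<lambda>k. f (c * k mod n)) w x = walk_prob n \<gamma> f w (c * x mod n)"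
proof (induction w arbitrary: x)
  case (Cons b w)
  let ?W = "\<lambda>j. \<gamma> j * walk_prob n \<gamma> f w ((c * x mod n + j) mod n)"
  have "(\<Sum>k<n. \<gamma> k * walk_prob n \<gamma> (\<lambda>k. f (c * k mod n)) w ((x + k) mod n))
      = (\<Sum>k<n. ?W (c * k mod n))"
  proof (rule sum.cong)
    fix k assume "k \<in> {..<n}"
    hence "\<gamma> k = \<gamma> (c * k mod n)" using inv unfolding mult_invariant_def by blast
    moreover have "c * ((x + k) mod n) mod n = (c * x mod n + c * k mod n) mod n"
      by (metis mod_add_eq mod_mult_right_eq distrib_left)
    ultimately show
      "\<gamma> k * walk_prob n \<gamma> (\<lambda>k. f (c * k mod n)) w ((x + k) mod n) = ?W (c * k mod n)"
      by (simp add: Cons.IH)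
  qed simp
  also have "\<dots> = (\<Sum>j<n. ?W j)"
    using sum.reindex_bij_betw[OF bij_betw_mult_mod_prime[OF n c], of ?W] by simp
  finally show ?case by simp
qed simp

lemma same_law_dilate:
  assumes n: "prime n" and c: "\<not> n dvd c" and inv: "mult_invariant n \<gamma> c"
  shows "same_law n \<gamma> f (\<lambda>k. f (c * k mod n))"
  unfolding same_law_def seq_prob_def walk_prob_dilate[OF assms]
  using sum.reindex_bij_betw[OF bij_betw_mult_mod_prime[OF n c], of "walk_prob n \<gamma> f _"] by simp

lemma not_is_shift_dilate_01:
  assumes n: "prime n" and c: "1 < c" "c < n - 1"
  shows "\<not> is_shift n (\<lambda>k. k \<in> {0, 1}) (\<lambda>k. c * k mod n \<in> {0, 1})"
proof
  assume "is_shift n (\<lambda>k. k \<in> {0, 1}) (\<lambda>k. c * k mod n \<in> {0, 1})"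
  then obtain l where l: "l < n"
    and shift: "\<forall>k<n. k \<in> {0, 1} \<longleftrightarrow> c * ((k + l) mod n) mod n \<in> {0, 1}"
    unfolding is_shift_def by blast
  have at_0: "c * l mod n \<in> {0, 1}" using shift[rule_format, of 0] l by simp
  have "c * ((1 + l) mod n) mod n = (c * l mod n + c) mod n"
    by (metis mod_add_eq mod_mult_right_eq distrib_left mult.right_neutral add.commute
        mod_mod_trivial mod_add_left_eq)
  hence at_1: "(c * l mod n + c) mod n \<in> {0, 1}" using shift[rule_format, of 1] c by simp
  show False
  proof (cases "c * l mod n = 0")
    case True
    hence "n dvd c * l" by (simp add: dvd_eq_mod_eq_0)
    hence "l = 0" using n l c by (auto simp: prime_dvd_mult_iff dest: dvd_imp_le)
    thus False using at_1 c by simp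
  next
    case False
    thus False using at_0 at_1 c by simp
  qed
qed

lemma minus_one_mult_mod:
  fixes j n :: nat
  assumes "j < n"
  shows "(n - 1) * j mod n = (n - j) mod n"
proof (cases "j = 0")
  case False
  hence "(n - 1) * j = (n - j) + n * (j - 1)"
    using assms by (simp add: algebra_simps diff_mult_distrib2 diff_mult_distrib)
  thus ?thesis by simp
qed simp

lemma not_is_shift_negate_013:
  assumes n: "n > 5"
  shows "\<not> is_shift n (\<lambda>k. k \<in> {0, 1, 3}) (\<lambda>k. (n - 1) * k mod n \<in> {0, 1, 3})"
proof
  assume "is_shift n (\<lambda>k. k \<in> {0, 1, 3}) (\<lambda>k. (n - 1) * k mod n \<in> {0, 1, 3})"
  then obtain l where l: "l < n"
    and shift: "\<forall>k<n. k \<in> {0, 1, 3} \<longleftrightarrow> (n - 1) * ((k + l) mod n) mod n \<in> {0, 1, 3}"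
    unfolding is_shift_def by blast
  have neg: "k \<in> {0, 1, 3} \<longleftrightarrow> (n - (k + l) mod n) mod n \<in> {0, 1, 3}" if "k < n" for k
    using shift[rule_format, OF that] minus_one_mult_mod[of "(k + l) mod n" n] n by simp
  have "l = 0 \<or> l = n - 1 \<or> l = n - 3"
  proof (cases "l = 0")
    case False
    hence "n - l \<in> {0, 1, 3}" using neg[of 0] n l by simp
    thus ?thesis using False l by auto
  qed simp
  moreover have "l \<noteq> 0"
  proof
    assume "l = 0"
    thus False using neg[of 1] n by auto
  qed
  moreover have "l \<noteq> n - 1"
  proof
    assume "l = n - 1"
    hence "(3 + l) mod n = 2" using n by (simp add: mod_if)
    thus False using neg[of 3] n by auto
  qed
  moreover have "l \<noteq> n - 3"
  proof
    assume "l = n - 3"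
    hence "(1 + l) mod n = n - 2" using n by simp
    thus False using neg[of 1] n by simp
  qed
  ultimately show False by blast
qed

lemma not_mult_invariant_if_reconstructive:
  assumes n: "prime n" "n > 5" and rec: "reconstructive n \<gamma>" and c: "1 < c" "c < n"
  shows "\<not> mult_invariant n \<gamma> c"
proof
  assume inv: "mult_invariant n \<gamma> c"
  have "\<not> n dvd c" using c by (auto dest: dvd_imp_le)
  note indistinguishable = same_law_dilate[OF n(1) this inv]
  show False
  \<comment> \<open>{0, 1} is symmetric up to a shift, so c = -1 needs the asymmetric set {0, 1, 3}.\<close>
  proof (cases "c = n - 1")
    case True
    have "is_shift n (\<lambda>k. k \<in> {0, 1, 3}) (\<lambda>k. c * k mod n \<in> {0, 1, 3})"
      using rec indistinguishable unfolding reconstructive_def by blast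
    thus False using not_is_shift_negate_013[OF n(2)] True by simp
  next
    case False
    hence "c < n - 1" using c by simp
    moreover have "is_shift n (\<lambda>k. k \<in> {0, 1}) (\<lambda>k. c * k mod n \<in> {0, 1})"
      using rec indistinguishable unfolding reconstructive_def by blast
    ultimately show False using not_is_shift_dilate_01[OF n(1) c(1)] by blast
  qed
qed

theorem theorem2:
  fixes n :: nat and \<gamma> :: "nat \<Rightarrow> real"
  assumes "prime n" and "n > 5"
    and "step_dist n \<gamma>"
    and "\<forall>k<n. \<gamma> k \<in> \<rat>"
    and "reconstructive n \<gamma>"
  shows "inj_on (fourier n \<gamma>) {..<n}"
proof (rule inj_onI, rule ccontr)
  fix x y assume "x \<in> {..<n}" "y \<in> {..<n}" "fourier n \<gamma> x = fourier n \<gamma> y" "x \<noteq> y"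
  then obtain c where "1 < c" "c < n" "mult_invariant n \<gamma> c"
    using mult_invariant_if_fourier_eq[of n \<gamma> x y] assms(1-4) by auto
  thus False using not_mult_invariant_if_reconstructive assms(1,2,5) by blast
qed

end
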